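(* Let $n$ be a positive integer and $0<\mu\leqq 1$, and set $$\phi(\mu)=\frac{\pi}{2}(\mu+1)-\arctan\frac{\cos\frac{\mu\pi}{2}}{\sin\frac{\mu\pi}{2}+\frac{n\mu}{1-\mu}\left(\frac{1-\mu}{1+\mu}\right)^{\frac{1+\mu}{2}}}.$$ If $p(z)\in\mathcal{H}[1,n]$ satisfies $$|\arg((p(z))^2+zp'(z))|<\phi(\mu)\qquad(z\in\mathbb{U}),$$ then $$|\arg(p(z))|<\frac{\pi}{2}\mu\qquad(z\in\mathbb{U}).$$
   Context: $\mathbb{U}=\{z\in\mathbb{C}:|z|<1\}$ is the open unit disk. For a positive integer $n$, $\mathcal{H}[1,n]$ denotes the class of functions analytic in $\mathbb{U}$ of the form $p(z)=1+\sum_{k=n}^{\infty}a_kz^k$. $\arg$ denotes the principal argument. *)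

theory Defs
  imports "HOL-Complex_Analysis.Complex_Analysis"
begin

definition H1 :: "nat \<Rightarrow> (complex \<Rightarrow> complex) set" where
  "H1 n = {p. p holomorphic_on ball 0 1 \<and>
      (\<exists>a::nat \<Rightarrow> complex. a 0 = 1 \<and> (\<forall>k. 0 < k \<and> k < n \<longrightarrow> a k = 0) \<and>
         (\<forall>z\<in>ball 0 1. (\<lambda>k. a k * z ^ k) sums p z))}"

definition phi :: "nat \<Rightarrow> real \<Rightarrow> real" where
  "phi n \<mu> = pi / 2 * (\<mu> + 1) -
     arctan (cos (\<mu> * pi / 2) /
       (sin (\<mu> * pi / 2) + real n * \<mu> / (1 - \<mu>) * ((1 - \<mu>) / (1 + \<mu>)) powr ((1 + \<mu>) / 2)))"

end

theory Submission
  imports Defs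
begin

text \<open>
  If the claim fails, then, as \<open>p 0 = 1\<close>, there is a point \<open>z\<^sub>0\<close> of least modulus at which
  \<open>p\<close> leaves the sector \<open>\<bar>arg w\<bar> < \<mu>\<pi>/2\<close>: the disc \<open>\<bar>z\<bar> < \<bar>z\<^sub>0\<bar>\<close> is mapped into the sector
  and \<open>p z\<^sub>0\<close> is \<open>0\<close> or lies on one of its edges. The function \<open>q = p\<close> in the first case and
  \<open>q = p\<^bsup>1/\<mu>\<^esup>\<close> in the second has positive real part on that disc and purely imaginary
  value at \<open>z\<^sub>0\<close>, so Jack's lemma applied to \<open>(q - 1)/(q + 1) = O(z\<^sup>n)\<close> yields
  \<open>z\<^sub>0 q'(z\<^sub>0) = m (q(z\<^sub>0)\<^sup>2 - 1)/2\<close> with \<open>m \<ge> n\<close>. In the first case \<open>p(z\<^sub>0)\<^sup>2 + z\<^sub>0 p'(z\<^sub>0) = -m/2\<close>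
  has argument \<open>\<pi>\<close>. In the second case \<open>z\<^sub>0 p'(z\<^sub>0) = \<plusminus>i \<mu> m (A\<^sup>2 + 1)/(2A) p(z\<^sub>0)\<close> with
  \<open>A = \<bar>p(z\<^sub>0)\<bar>\<^bsup>1/\<mu>\<^esup>\<close>; this makes the argument of \<open>p(z\<^sub>0)\<^sup>2 + z\<^sub>0 p'(z\<^sub>0)\<close> explicit, and a
  weighted AM-GM inequality in \<open>A\<close> bounds it from below by \<open>phi n \<mu>\<close>. Both contradict the hypothesis.
\<close>

section \<open>Jack's lemma\<close>

lemma tendsto_radial:
  fixes w :: complex
  assumes "isCont f w"
  shows "((\<lambda>t. f (of_real t * w)) \<longlongrightarrow> f w) (at_left 1)"
proof -
  have "((\<lambda>t. of_real t * w) \<longlongrightarrow> of_real 1 * w) (at_left (1::real))"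
    by (intro tendsto_intros)
  then show ?thesis
    using isCont_tendsto_compose[OF assms] by simp
qed

lemma eventually_at_left_1I:
  assumes "\<And>t. 0 < t \<Longrightarrow> t < 1 \<Longrightarrow> P t"
  shows "eventually P (at_left (1::real))"
  unfolding eventually_at_left_field using assms by (intro exI[of _ 0]) auto

lemma norm_le_power_of_factor:
  fixes g h :: "complex \<Rightarrow> complex"
  assumes holh: "h holomorphic_on ball 0 r"
    and fac: "\<forall>z\<in>ball 0 r. g z = z ^ n * h z"
    and lt: "\<forall>z\<in>ball 0 r. norm (g z) < 1"
    and z: "z \<in> ball 0 r"
  shows "norm (g z) \<le> (norm z / r) ^ n"
proof -
  have bound: "norm (h z) * s ^ n \<le> 1" if s: "norm z < s" "s < r" for s
  proof -
    have s0: "0 < s" using s norm_ge_zero[of z] by linarith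
    have "cball 0 s \<subseteq> ball 0 r" using s by auto
    then have "h holomorphic_on cball 0 s"
      using holh by (rule holomorphic_on_subset[rotated])
    then have cont: "continuous_on (closure (ball 0 s)) h" and holb: "h holomorphic_on interior (ball 0 s)"
      using s0 by (auto intro: holomorphic_on_imp_continuous_on holomorphic_on_subset[OF _ ball_subset_cball])
    have on_sphere: "norm (h w) \<le> 1 / s ^ n" if "w \<in> sphere 0 s" for w
    proof -
      have w: "w \<in> ball 0 r" "norm w = s" using that s by auto
      then have "norm (g w) = s ^ n * norm (h w)"
        using fac by (simp add: norm_mult norm_power)
      moreover have "norm (g w) < 1"
        using lt w(1) by blast
      ultimately have "s ^ n * norm (h w) < 1"
        by simp
      then show ?thesis using s0 by (simp add: field_simps)
    qed
    have "norm (h z) \<le> 1 / s ^ n"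
      by (rule maximum_modulus_frontier[OF holb cont])
        (use on_sphere s0 s(1) in \<open>auto simp: frontier_ball\<close>)
    then show ?thesis using s0 by (simp add: field_simps)
  qed
  have "((\<lambda>s. norm (h z) * s ^ n) \<longlongrightarrow> norm (h z) * r ^ n) (at_left r)"
    by (intro tendsto_intros)
  moreover have "\<forall>\<^sub>F s in at_left r. norm (h z) * s ^ n \<le> 1"
    unfolding eventually_at_left_field
    by (intro exI[of _ "norm z"]) (use z bound in auto)
  ultimately have "norm (h z) * r ^ n \<le> 1"
    by (rule tendsto_upperbound) simp
  moreover have "0 < r" using z norm_ge_zero[of z] by (simp del: norm_ge_zero)
  ultimately have "norm z ^ n * norm (h z) \<le> norm z ^ n * (1 / r ^ n)"
    by (intro mult_left_mono) (simp_all add: field_simps)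
  then show ?thesis
    using fac z by (simp add: norm_mult norm_power power_divide)
qed

lemma Im_deriv_at_max_on_circle:
  fixes f :: "complex \<Rightarrow> complex"
  assumes U: "open U" "z0 \<in> U" and df: "(f has_field_derivative f') (at z0)"
    and f0: "f z0 \<noteq> 0"
    and max: "\<forall>w\<in>U. norm w = norm z0 \<longrightarrow> norm (f w) \<le> norm (f z0)"
  shows "Im (z0 * f' / f z0) = 0"
proof -
  define F where "F \<theta> = f (z0 * exp (\<i> * of_real \<theta>)) / f z0" for \<theta> :: real
  have "((\<lambda>\<theta>. z0 * exp (\<i> * \<theta>)) has_field_derivative z0 * \<i>) (at (of_real 0))"
    by (auto intro!: derivative_eq_intros)
  then have "((\<lambda>\<theta>. f (z0 * exp (\<i> * \<theta>)) / f z0) has_field_derivative f' * (z0 * \<i>) / f z0)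
      (at (of_real 0))"
    using df f0 by (auto intro!: derivative_eq_intros DERIV_chain2[of f])
  then have "((\<lambda>\<theta>. Re (F \<theta>)) has_real_derivative Re (f' * (z0 * \<i>) / f z0)) (at 0)"
    unfolding F_def by (intro has_field_derivative_Re has_vector_derivative_real_field)
  moreover have "\<forall>\<^sub>F \<theta> in at 0. Re (F \<theta>) \<le> Re (F 0)"
  proof -
    have "isCont (\<lambda>\<theta>::real. z0 * exp (\<i> * of_real \<theta>)) 0"
      by (intro continuous_intros)
    then have "\<forall>\<^sub>F \<theta> in at 0. z0 * exp (\<i> * of_real \<theta>) \<in> U"
      using U by (auto simp: isCont_def dest: topological_tendstoD)
    then show ?thesis
    proof (rule eventually_mono)
      fix \<theta> assume "z0 * exp (\<i> * of_real \<theta>) \<in> U"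
      then have "norm (f (z0 * exp (\<i> * of_real \<theta>))) \<le> norm (f z0)"
        using max by (simp add: norm_mult)
      then have "norm (F \<theta>) \<le> 1"
        using f0 by (simp add: F_def norm_divide divide_le_eq_1)
      then show "Re (F \<theta>) \<le> Re (F 0)"
        using f0 complex_Re_le_cmod[of "F \<theta>"] by (simp add: F_def)
    qed
  qed
  ultimately have "(*) (Re (f' * (z0 * \<i>) / f z0)) = (\<lambda>h. 0)"
    by (intro has_derivative_local_max) (simp_all add: has_field_derivative_def)
  from fun_cong[OF this, of 1] have "Re (f' * (z0 * \<i>) / f z0) = 0"
    by simp
  moreover have "f' * (z0 * \<i>) / f z0 = \<i> * (z0 * f' / f z0)"
    by simp
  ultimately show ?thesis
    by (simp only: Re_i_times neg_equal_0_iff_equal)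
qed

lemma Re_deriv_ge_radial:
  fixes f :: "complex \<Rightarrow> complex"
  assumes df: "(f has_field_derivative f') (at z0)" and f0: "f z0 \<noteq> 0"
    and radial: "\<And>t. 0 < t \<Longrightarrow> t < 1 \<Longrightarrow> norm (f (of_real t * z0)) \<le> t ^ n * norm (f z0)"
  shows "real n \<le> Re (z0 * f' / f z0)"
proof -
  define F where "F t = Re (f (of_real t * z0) / f z0)" for t :: real
  have "((\<lambda>t. f (t * z0) / f z0) has_field_derivative f' * z0 / f z0) (at (of_real 1))"
    using df f0 by (auto intro!: derivative_eq_intros DERIV_chain2[of f])
  then have "(F has_real_derivative Re (f' * z0 / f z0)) (at 1)"
    unfolding F_def by (intro has_field_derivative_Re has_vector_derivative_real_field)
  then have "(F has_real_derivative Re (z0 * f' / f z0)) (at 1)"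
    by (simp add: mult.commute)
  then have "((\<lambda>t. (F t - F 1) / (t - 1)) \<longlongrightarrow> Re (z0 * f' / f z0)) (at_left 1)"
    unfolding has_field_derivative_iff by (rule tendsto_mono[rotated]) (simp add: at_le)
  moreover have "((\<lambda>t::real. \<Sum>i<n. t ^ i) \<longlongrightarrow> (\<Sum>i<n. 1 ^ i)) (at_left 1)"
    by (intro tendsto_intros)
  moreover have "\<forall>\<^sub>F t in at_left 1. (\<Sum>i<n. t ^ i) \<le> (F t - F 1) / (t - 1)"
  proof (rule eventually_at_left_1I)
    fix t :: real assume t: "0 < t" "t < 1"
    have "F t \<le> norm (f (of_real t * z0) / f z0)"
      unfolding F_def by (rule complex_Re_le_cmod)
    also have "\<dots> \<le> t ^ n"
      using radial[OF t] f0 by (simp add: norm_divide divide_le_eq)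
    finally have "(\<Sum>i<n. t ^ i) * (1 - t) \<le> 1 - F t"
      using one_diff_power_eq[of t n] by (simp add: mult.commute)
    then show "(\<Sum>i<n. t ^ i) \<le> (F t - F 1) / (t - 1)"
      using t f0 by (simp add: F_def field_simps)
  qed
  ultimately show ?thesis
    by (intro tendsto_le[of "at_left 1"]) simp_all
qed

lemma Jack_lemma:
  fixes g h :: "complex \<Rightarrow> complex"
  assumes U: "open U" "ball 0 r \<subseteq> U" "z0 \<in> U" and r: "norm z0 = r" "0 < r"
    and holg: "g holomorphic_on U" and holh: "h holomorphic_on ball 0 r"
    and fac: "\<forall>z\<in>ball 0 r. g z = z ^ n * h z"
    and lt: "\<forall>z\<in>ball 0 r. norm (g z) < 1" and eq: "norm (g z0) = 1"
  shows "\<exists>m. real n \<le> m \<and> z0 * deriv g z0 = of_real m * g z0"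
proof -
  have dg: "(g has_field_derivative deriv g z0) (at z0)"
    using holg U by (auto intro: holomorphic_derivI)
  have g0: "g z0 \<noteq> 0" using eq by auto
  have circle: "norm (g w) \<le> norm (g z0)" if "w \<in> U" "norm w = norm z0" for w
  proof -
    have "isCont g w"
      using holg U(1) that(1) holomorphic_on_imp_continuous_on continuous_on_eq_continuous_at by blast
    then have "((\<lambda>t. norm (g (of_real t * w))) \<longlongrightarrow> norm (g w)) (at_left 1)"
      by (intro tendsto_norm tendsto_radial)
    moreover have "\<forall>\<^sub>F t in at_left 1. norm (g (of_real t * w)) \<le> 1"
      using lt that r by (intro eventually_at_left_1I) (simp add: norm_mult less_imp_le)
    ultimately show ?thesis
      using eq by (simp add: tendsto_upperbound)
  qed
  have radial: "norm (g (of_real t * z0)) \<le> t ^ n * norm (g z0)" if "0 < t" "t < 1" for t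
    using norm_le_power_of_factor[OF holh fac lt, of "of_real t * z0"] that r eq
    by (simp add: norm_mult)
  define D where "D = z0 * deriv g z0 / g z0"
  have "Im D = 0"
    unfolding D_def using U(1,3) dg g0 circle by (intro Im_deriv_at_max_on_circle) auto
  moreover have "real n \<le> Re D"
    unfolding D_def using dg g0 radial by (rule Re_deriv_ge_radial)
  moreover have "z0 * deriv g z0 = D * g z0"
    using g0 by (simp add: D_def)
  ultimately show ?thesis
    by (intro exI[of _ "Re D"]) (simp add: complex_eq_iff)
qed

lemma norm_diff_one_less_norm_add_one:
  fixes w :: complex
  assumes "0 < Re w"
  shows "norm (w - 1) < norm (w + 1)"
proof -
  have "norm (w - 1)^2 < norm (w + 1)^2"
    unfolding cmod_power2 using assms by (simp add: power2_eq_square algebra_simps)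
  then show ?thesis by (rule power2_less_imp_less) simp
qed

lemma norm_diff_one_eq_norm_add_one:
  fixes w :: complex
  assumes "Re w = 0"
  shows "norm (w - 1) = norm (w + 1)"
proof -
  have "norm (w - 1)^2 = norm (w + 1)^2"
    using assms by (simp add: cmod_power2)
  then show ?thesis by (simp add: power2_eq_iff_nonneg)
qed

lemma deriv_Cayley:
  assumes "(q has_field_derivative q') (at z)" "q z + 1 \<noteq> 0"
  shows "deriv (\<lambda>z. (q z - 1) / (q z + 1)) z = 2 * q' / (q z + 1)\<^sup>2"
  using assms
  by (intro DERIV_imp_deriv) (auto intro!: derivative_eq_intros simp: power2_eq_square field_simps)

lemma Jack_lemma_Re:
  fixes q k :: "complex \<Rightarrow> complex"
  assumes U: "open U" "ball 0 r \<subseteq> U" "z0 \<in> U" and r: "norm z0 = r" "0 < r"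
    and holq: "q holomorphic_on U" and holk: "k holomorphic_on ball 0 r"
    and fac: "\<forall>z\<in>ball 0 r. q z = 1 + z ^ n * k z"
    and pos: "\<forall>z\<in>ball 0 r. 0 < Re (q z)" and Re0: "Re (q z0) = 0"
  shows "\<exists>m. real n \<le> m \<and> z0 * deriv q z0 = of_real m * ((q z0)\<^sup>2 - 1) / 2"
proof -
  define V where "V = U \<inter> q -` (- {-1})"
  have "open V"
    using U(1) holq unfolding V_def
    by (auto intro!: continuous_open_preimage holomorphic_on_imp_continuous_on)
  moreover have "ball 0 r \<subseteq> V"
    using U(2) pos unfolding V_def by force
  moreover have "z0 \<in> V"
    using U(3) Re0 unfolding V_def by force
  ultimately have V: "open V" "ball 0 r \<subseteq> V" "z0 \<in> V" by blast+
  have qV: "q z + 1 \<noteq> 0" if "z \<in> V" for z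
    using that by (auto simp: V_def add_eq_0_iff2)
  \<comment> \<open>the Cayley transform maps the right half-plane into the unit disc and the imaginary axis
      into the unit circle\<close>
  define g where "g z = (q z - 1) / (q z + 1)" for z
  have "\<exists>m. real n \<le> m \<and> z0 * deriv g z0 = of_real m * g z0"
  proof (rule Jack_lemma[OF V r])
    show "g holomorphic_on V"
      unfolding g_def using holq qV by (auto intro!: holomorphic_intros holomorphic_on_subset[of q U] simp: V_def)
    show "(\<lambda>z. k z / (q z + 1)) holomorphic_on ball 0 r"
      using holk holq qV V(2) by (auto intro!: holomorphic_intros intro: holomorphic_on_subset[of q U] simp: V_def)
    show "\<forall>z\<in>ball 0 r. g z = z ^ n * (k z / (q z + 1))"
      using fac by (simp add: g_def)
    show "\<forall>z\<in>ball 0 r. norm (g z) < 1"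
      using pos V(2) qV by (auto simp: g_def norm_divide divide_less_eq norm_diff_one_less_norm_add_one)
    show "norm (g z0) = 1"
      using Re0 V(3) qV by (simp add: g_def norm_divide norm_diff_one_eq_norm_add_one)
  qed
  then obtain m where m: "real n \<le> m" "z0 * deriv g z0 = of_real m * g z0" by blast
  have "(q has_field_derivative deriv q z0) (at z0)"
    using holq U by (auto intro: holomorphic_derivI)
  then have "deriv g z0 = 2 * deriv q z0 / (q z0 + 1)\<^sup>2"
    unfolding g_def [abs_def] using qV[OF V(3)] by (rule deriv_Cayley)
  then have "z0 * (2 * deriv q z0 / (q z0 + 1)\<^sup>2) = of_real m * ((q z0 - 1) / (q z0 + 1))"
    using m(2) by (simp add: g_def)
  then have "z0 * (2 * deriv q z0) = of_real m * ((q z0 - 1) / (q z0 + 1)) * (q z0 + 1)\<^sup>2"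
    using qV[OF V(3)] by (simp add: divide_eq_eq mult.assoc)
  also have "\<dots> = of_real m * ((q z0)\<^sup>2 - 1)"
    using qV[OF V(3)] by (simp add: power2_eq_square field_simps)
  finally have "z0 * deriv q z0 = of_real m * ((q z0)\<^sup>2 - 1) / 2"
    by (simp add: field_simps)
  with m(1) show ?thesis by blast
qed

section \<open>Leaving a sector\<close>

definition sector :: "real \<Rightarrow> complex set" where
  "sector b = {w. w \<noteq> 0 \<and> \<bar>Arg w\<bar> < b}"

lemma sector_subset_Re_pos:
  assumes "b \<le> pi / 2"
  shows "sector b \<subseteq> {w. 0 < Re w}"
  using assms Arg_Re_pos by (force simp: sector_def)

lemma open_sector:
  assumes "b \<le> pi / 2"
  shows "open (sector b)"
proof -
  have "continuous_on {w. 0 < Re w} Arg"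
    by (rule continuous_on_subset[OF continuous_on_Arg]) (auto simp: complex_nonpos_Reals_iff)
  then have "open ({w. 0 < Re w} \<inter> Arg -` {-b<..<b})"
    by (rule continuous_open_preimage) (auto intro: open_halfspace_Re_gt)
  moreover have "sector b = {w. 0 < Re w} \<inter> Arg -` {-b<..<b}"
    using sector_subset_Re_pos[OF assms] by (auto simp: sector_def)
  ultimately show ?thesis
    by simp
qed

lemma sector_boundary:
  assumes "b \<le> pi / 2" "w \<in> closure (sector b)" "w \<notin> sector b"
  shows "w = 0 \<or> \<bar>Arg w\<bar> = b"
proof (cases "w = 0")
  case False
  have "closure (sector b) \<subseteq> {w. 0 \<le> Re w}"
    using sector_subset_Re_pos[OF assms(1)]
    by (intro closure_minimal) (auto simp: closed_halfspace_Re_ge)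
  with assms(2) False have "w \<notin> \<real>\<^sub>\<le>\<^sub>0"
    by (auto simp: complex_nonpos_Reals_iff complex_eq_iff)
  obtain x where x: "\<forall>k. x k \<in> sector b" "x \<longlonglongrightarrow> w"
    using assms(2) closure_sequential by blast
  then have "(\<lambda>k. \<bar>Arg (x k)\<bar>) \<longlonglongrightarrow> \<bar>Arg w\<bar>"
    using \<open>w \<notin> \<real>\<^sub>\<le>\<^sub>0\<close> by (intro tendsto_intros)
  then have "\<bar>Arg w\<bar> \<le> b"
    by (rule tendsto_upperbound) (use x in \<open>auto simp: sector_def less_imp_le\<close>)
  with assms(3) False show ?thesis
    by (simp add: sector_def)
qed simp

lemma first_exit_point:
  fixes p :: "complex \<Rightarrow> complex"
  assumes contp: "continuous_on (ball 0 1) p" and S: "open S" "p 0 \<in> S"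
    and z1: "z1 \<in> ball 0 1" "p z1 \<notin> S"
  obtains z0 where "z0 \<in> ball 0 1" "0 < norm z0" "p ` ball 0 (norm z0) \<subseteq> S"
    "p z0 \<in> closure S" "p z0 \<notin> S"
proof -
  define B where "B = cball 0 (norm z1) \<inter> p -` (- S)"
  have "cball 0 (norm z1) \<subseteq> ball 0 1" using z1 by auto
  then have "closed B"
    unfolding B_def using contp S(1)
    by (intro continuous_closed_preimage) (auto intro: continuous_on_subset)
  moreover have "bounded B"
    unfolding B_def by (intro bounded_Int) simp
  ultimately have "compact B"
    by (simp add: compact_eq_bounded_closed)
  moreover have "z1 \<in> B" using z1 by (simp add: B_def)
  ultimately obtain z0 where z0: "z0 \<in> B" "\<forall>z\<in>B. norm z0 \<le> norm z"
    using continuous_attains_inf[OF _ _ continuous_on_norm_id] by blast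
  have z0b: "z0 \<in> ball 0 1" and "p z0 \<notin> S"
    using z0(1) z1(1) by (auto simp: B_def)
  have inside: "p ` ball 0 (norm z0) \<subseteq> S"
  proof
    fix w assume "w \<in> p ` ball 0 (norm z0)"
    then obtain z where z: "norm z < norm z0" "w = p z" by auto
    show "w \<in> S"
    proof (rule ccontr)
      assume "w \<notin> S"
      moreover have "norm z0 \<le> norm z1" using z0(1) by (simp add: B_def)
      ultimately have "z \<in> B" using z by (simp add: B_def)
      with z z0(2) show False by fastforce
    qed
  qed
  have "0 < norm z0"
    using S(2) \<open>p z0 \<notin> S\<close> by (cases "z0 = 0") auto
  have "isCont p z0"
    using contp z0b by (simp add: continuous_on_eq_continuous_at)
  then have "p z0 \<in> closure S"
  proof (rule Lim_in_closed_set[OF closed_closure _ _ tendsto_radial, rotated 2])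
    show "\<forall>\<^sub>F t in at_left 1. p (of_real t * z0) \<in> closure S"
      using inside closure_subset \<open>0 < norm z0\<close>
      by (intro eventually_at_left_1I) (force simp: norm_mult)
  qed simp
  with z0b \<open>0 < norm z0\<close> inside \<open>p z0 \<notin> S\<close> show ?thesis
    using that by blast
qed

section \<open>The factor \<open>z\<^sup>n\<close> and fractional powers\<close>

lemma H1_factor:
  assumes "p \<in> H1 n" "0 < n"
  obtains P where "p holomorphic_on ball 0 1" "P holomorphic_on ball 0 1"
    "\<forall>z\<in>ball 0 1. p z = 1 + z ^ n * P z"
proof -
  obtain a where holp: "p holomorphic_on ball 0 1" and a0: "a 0 = 1"
    and gap: "\<forall>k. 0 < k \<and> k < n \<longrightarrow> a k = 0"
    and sums: "\<forall>z\<in>ball 0 1. (\<lambda>k. a k * z ^ k) sums p z"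
    using assms(1) unfolding H1_def by blast
  have p0: "p 0 = 1"
    using sums[rule_format, of 0] a0 by (simp add: sums_iff)
  define P where "P z = (if z = 0 then a n else (p z - 1) / z ^ n)" for z
  have "(\<lambda>k. a (k + n) * z ^ k) sums P z" if "z \<in> ball 0 1" for z
  proof (cases "z = 0")
    case False
    have "(\<Sum>k<n. a k * z ^ k) = (\<Sum>k\<in>{0}. a k * z ^ k)"
      using gap assms(2) by (intro sum.mono_neutral_right) auto
    then have "(\<lambda>k. a (k + n) * z ^ (k + n)) sums (p z - 1)"
      using sums_split_initial_segment[OF sums[rule_format, OF that], of n] a0 by simp
    then have "(\<lambda>k. a (k + n) * z ^ (k + n) / z ^ n) sums ((p z - 1) / z ^ n)"
      by (rule sums_divide)
    then show ?thesis
      using False by (simp add: P_def power_add)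
  qed (simp add: P_def)
  then have "P holomorphic_on ball 0 1"
    by (intro power_series_holomorphic[of 0 1 "\<lambda>k. a (k + n)"]) simp
  moreover have "\<forall>z\<in>ball 0 1. p z = 1 + z ^ n * P z"
    using p0 assms(2) by (auto simp: P_def)
  ultimately show ?thesis
    using that holp by blast
qed

lemma holomorphic_difference_quotient:
  assumes "f holomorphic_on S" "open S" "a \<in> S"
  obtains k where "k holomorphic_on S" "\<forall>z\<in>S. f z = f a + (z - a) * k z"
proof
  show "(\<lambda>z. if z = a then deriv f a else (f z - f a) / (z - a)) holomorphic_on S"
    using pole_lemma[OF assms(1)] assms(2,3) by (simp add: interior_open)
qed auto

lemma exp_Ln_divide_polar:
  assumes "w \<noteq> 0"
  shows "exp (Ln w / of_real \<mu>) = rcis (norm w powr (1 / \<mu>)) (Arg w / \<mu>)"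
  using assms
  by (simp add: exp_eq_polar rcis_def Arg_eq_Im_Ln powr_def Re_divide_of_real Im_divide_of_real)

lemma Re_exp_Ln_divide_pos:
  assumes "w \<noteq> 0" "0 < \<mu>" "\<bar>Arg w\<bar> < pi / 2 * \<mu>"
  shows "0 < Re (exp (Ln w / of_real \<mu>))"
proof -
  have "\<bar>Arg w\<bar> / \<mu> < pi / 2 * \<mu> / \<mu>"
    using assms by (intro divide_strict_right_mono) auto
  then have "\<bar>Arg w / \<mu>\<bar> < pi / 2"
    using assms(2) by (simp add: abs_divide)
  then have "0 < cos (Arg w / \<mu>)"
    using abs_less_iff[of "Arg w / \<mu>" "pi / 2"] by (intro cos_gt_zero_pi) linarith+
  then show ?thesis
    using assms by (simp add: exp_Ln_divide_polar)
qed

lemma exp_Ln_divide_edge: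
  assumes "w \<noteq> 0" "0 < \<mu>" "\<bar>Arg w\<bar> = pi / 2 * \<mu>"
  shows "exp (Ln w / of_real \<mu>) = \<i> * of_real (sgn (Arg w) * norm w powr (1 / \<mu>))"
proof -
  have arg: "Arg w / \<mu> = sgn (Arg w) * (pi / 2)" and "Arg w \<noteq> 0"
    using assms by (auto simp: sgn_if abs_if field_simps)
  have "exp (Ln w / of_real \<mu>) = rcis (norm w powr (1 / \<mu>)) (Arg w / \<mu>)"
    by (rule exp_Ln_divide_polar[OF assms(1)])
  also have "\<dots> = rcis (norm w powr (1 / \<mu>)) (sgn (Arg w) * (pi / 2))"
    by (simp only: arg)
  also have "\<dots> = \<i> * of_real (sgn (Arg w) * norm w powr (1 / \<mu>))"
    using \<open>Arg w \<noteq> 0\<close> by (simp add: rcis_def sgn_if complex_eq_iff)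
  finally show ?thesis .
qed

lemma exp_Ln_divide_factor:
  fixes p P :: "complex \<Rightarrow> complex"
  assumes holp: "p holomorphic_on S" and holP: "P holomorphic_on S"
    and fac: "\<forall>z\<in>S. p z = 1 + z ^ n * P z" and slit: "p ` S \<subseteq> - \<real>\<^sub>\<le>\<^sub>0"
  obtains k where "k holomorphic_on S" "\<forall>z\<in>S. exp (Ln (p z) / of_real \<mu>) = 1 + z ^ n * k z"
proof -
  have "(\<lambda>\<zeta>. exp (Ln \<zeta> / of_real \<mu>)) holomorphic_on - \<real>\<^sub>\<le>\<^sub>0"
    by (intro holomorphic_intros) auto
  moreover have "open (- \<real>\<^sub>\<le>\<^sub>0 :: complex set)" "1 \<in> - \<real>\<^sub>\<le>\<^sub>0"
    by (auto simp: open_Compl complex_nonpos_Reals_iff)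
  ultimately obtain K where K: "K holomorphic_on - \<real>\<^sub>\<le>\<^sub>0"
    "\<forall>\<zeta>\<in>- \<real>\<^sub>\<le>\<^sub>0. exp (Ln \<zeta> / of_real \<mu>) = exp (Ln 1 / of_real \<mu>) + (\<zeta> - 1) * K \<zeta>"
    by (rule holomorphic_difference_quotient)
  show ?thesis
  proof
    show "(\<lambda>z. P z * K (p z)) holomorphic_on S"
      using holP holomorphic_on_compose_gen[OF holp K(1) slit]
      by (auto intro!: holomorphic_intros simp: o_def)
    show "\<forall>z\<in>S. exp (Ln (p z) / of_real \<mu>) = 1 + z ^ n * (P z * K (p z))"
      using K(2) slit fac by auto
  qed
qed

lemma abs_Arg_less_pi_imp_notin_nonpos_Reals:
  assumes "w \<noteq> 0" "\<bar>Arg w\<bar> < pi"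
  shows "w \<notin> \<real>\<^sub>\<le>\<^sub>0"
  using assms Arg_eq_pi_iff[of w]
  by (auto simp: complex_nonpos_Reals_iff complex_is_Real_iff complex_eq_iff)

lemma has_field_derivative_exp_Ln_divide:
  assumes "(p has_field_derivative p') (at z)" "p z \<notin> \<real>\<^sub>\<le>\<^sub>0" "\<mu> \<noteq> 0"
  shows "((\<lambda>z. exp (Ln (p z) / of_real \<mu>)) has_field_derivative
    exp (Ln (p z) / of_real \<mu>) * p' / (of_real \<mu> * p z)) (at z)"
  using assms by (auto intro!: derivative_eq_intros simp: field_simps)

lemma Jack_lemma_root_Re:
  fixes p P :: "complex \<Rightarrow> complex"
  assumes \<mu>: "0 < \<mu>" "\<mu> \<le> 1"
    and holp: "p holomorphic_on ball 0 1" and holP: "P holomorphic_on ball 0 1"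
    and fac: "\<forall>z\<in>ball 0 1. p z = 1 + z ^ n * P z"
    and z0: "z0 \<in> ball 0 1" "0 < norm z0"
    and inside: "p ` ball 0 (norm z0) \<subseteq> sector (pi / 2 * \<mu>)"
    and edge: "p z0 \<noteq> 0" "\<bar>Arg (p z0)\<bar> = pi / 2 * \<mu>"
  defines "q \<equiv> \<lambda>z. exp (Ln (p z) / of_real \<mu>)"
  shows "\<exists>m. real n \<le> m \<and> z0 * deriv q z0 = of_real m * ((q z0)\<^sup>2 - 1) / 2"
proof -
  define r where "r = norm z0"
  define V where "V = ball 0 1 \<inter> p -` (- \<real>\<^sub>\<le>\<^sub>0)"
  have "sector (pi / 2 * \<mu>) \<subseteq> - \<real>\<^sub>\<le>\<^sub>0"
    using sector_subset_Re_pos[of "pi / 2 * \<mu>"] \<mu> by (auto simp: complex_nonpos_Reals_iff)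
  then have slit: "p ` ball 0 r \<subseteq> - \<real>\<^sub>\<le>\<^sub>0"
    using inside by (auto simp: r_def)
  have "r < 1" using z0 by (simp add: r_def)
  have "pi / 2 * \<mu> \<le> pi / 2"
    using \<mu> by simp
  then have "\<bar>Arg (p z0)\<bar> < pi"
    using edge(2) pi_gt_zero by linarith
  then have "p z0 \<notin> \<real>\<^sub>\<le>\<^sub>0"
    by (rule abs_Arg_less_pi_imp_notin_nonpos_Reals[OF edge(1)])
  have V: "open V" "ball 0 r \<subseteq> V" "z0 \<in> V"
    using holp slit \<open>r < 1\<close> z0 \<open>p z0 \<notin> \<real>\<^sub>\<le>\<^sub>0\<close> unfolding V_def
    by (auto intro!: continuous_open_preimage holomorphic_on_imp_continuous_on)
  have "p holomorphic_on V"
    using holp by (rule holomorphic_on_subset) (auto simp: V_def)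
  then have holq: "q holomorphic_on V"
    unfolding q_def by (intro holomorphic_intros) (auto simp: V_def)
  have "ball 0 r \<subseteq> ball 0 1"
    using \<open>r < 1\<close> by auto
  then have "p holomorphic_on ball 0 r" "P holomorphic_on ball 0 r"
    "\<forall>z\<in>ball 0 r. p z = 1 + z ^ n * P z"
    using holp holP fac by (auto intro: holomorphic_on_subset)
  then obtain k where "k holomorphic_on ball 0 r"
    "\<forall>z\<in>ball 0 r. exp (Ln (p z) / of_real \<mu>) = 1 + z ^ n * k z"
    using exp_Ln_divide_factor[OF _ _ _ slit] by blast
  then have "k holomorphic_on ball 0 r" "\<forall>z\<in>ball 0 r. q z = 1 + z ^ n * k z"
    by (simp_all add: q_def)
  moreover have "\<forall>z\<in>ball 0 r. 0 < Re (q z)"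
    using inside \<mu> unfolding q_def r_def by (auto simp: sector_def intro!: Re_exp_Ln_divide_pos)
  moreover have "Re (q z0) = 0"
    using exp_Ln_divide_edge[OF edge(1) \<mu>(1) edge(2)] by (simp add: q_def)
  ultimately show ?thesis
    using Jack_lemma_Re[OF V _ _ holq] z0 by (auto simp: r_def)
qed

lemma Jack_lemma_root:
  fixes p P :: "complex \<Rightarrow> complex"
  assumes \<mu>: "0 < \<mu>" "\<mu> \<le> 1"
    and holp: "p holomorphic_on ball 0 1" and holP: "P holomorphic_on ball 0 1"
    and fac: "\<forall>z\<in>ball 0 1. p z = 1 + z ^ n * P z"
    and z0: "z0 \<in> ball 0 1" "0 < norm z0"
    and inside: "p ` ball 0 (norm z0) \<subseteq> sector (pi / 2 * \<mu>)"
    and edge: "p z0 \<noteq> 0" "\<bar>Arg (p z0)\<bar> = pi / 2 * \<mu>"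
  defines "A \<equiv> norm (p z0) powr (1 / \<mu>)"
  shows "\<exists>m. real n \<le> m \<and>
    z0 * deriv p z0 = \<i> * of_real (sgn (Arg (p z0)) * (\<mu> * m * (A\<^sup>2 + 1) / (2 * A))) * p z0"
proof -
  define q where "q z = exp (Ln (p z) / of_real \<mu>)" for z
  obtain m where m: "real n \<le> m" "z0 * deriv q z0 = of_real m * ((q z0)\<^sup>2 - 1) / 2"
    using Jack_lemma_root_Re[OF \<mu> holp holP fac z0 inside edge] unfolding q_def by blast
  have q0: "q z0 = \<i> * of_real (sgn (Arg (p z0)) * A)"
    unfolding q_def A_def using edge(1) \<mu>(1) edge(2) by (rule exp_Ln_divide_edge)
  have "pi / 2 * \<mu> \<le> pi / 2"
    using \<mu> by simp
  then have "\<bar>Arg (p z0)\<bar> < pi"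
    using edge(2) pi_gt_zero by linarith
  then have slit: "p z0 \<notin> \<real>\<^sub>\<le>\<^sub>0"
    by (rule abs_Arg_less_pi_imp_notin_nonpos_Reals[OF edge(1)])
  have dp: "(p has_field_derivative deriv p z0) (at z0)"
    using holp z0 by (auto intro: holomorphic_derivI)
  have "\<mu> \<noteq> 0"
    using \<mu> by simp
  then have "deriv q z0 = q z0 * deriv p z0 / (of_real \<mu> * p z0)"
    unfolding q_def by (rule DERIV_imp_deriv[OF has_field_derivative_exp_Ln_divide[OF dp slit]])
  then have "z0 * deriv p z0 = of_real \<mu> * p z0 * (z0 * deriv q z0) / q z0"
    using edge(1) \<mu>(1) by (simp add: q_def field_simps)
  also have "\<dots> = \<i> * of_real (sgn (Arg (p z0)) * (\<mu> * m * (A\<^sup>2 + 1) / (2 * A))) * p z0"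
  proof -
    have "0 < A" using edge(1) by (simp add: A_def)
    moreover have "sgn (Arg (p z0)) = 1 \<or> sgn (Arg (p z0)) = -1"
      using edge(2) \<mu>(1) by (auto simp: sgn_if)
    ultimately show ?thesis
      unfolding m(2) q0 by (auto simp: power2_eq_square field_simps)
  qed
  finally show ?thesis
    using m(1) by blast
qed

section \<open>The angle at the exit point\<close>

text \<open>Weighted AM-GM with weights \<open>(1 + \<mu>)/2\<close> and \<open>(1 - \<mu>)/2\<close>; the left-hand side is the minimum of the
  right-hand side over \<open>x > 0\<close>.\<close>

lemma powr_add_powr_ge:
  fixes \<mu> x :: real
  assumes "0 < \<mu>" "\<mu> < 1" "0 < x"
  shows "2 / (1 - \<mu>) * ((1 - \<mu>) / (1 + \<mu>)) powr ((1 + \<mu>) / 2)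
         \<le> x powr (1 - \<mu>) + x powr (-1 - \<mu>)"
proof -
  define a b where "a = (1 + \<mu>) / 2" and "b = (1 - \<mu>) / 2"
  have ab: "0 < a" "0 < b" "a + b = 1" "a = 1 - b" "1 - \<mu> = 2 * b" "1 + \<mu> = 2 * a"
    using assms by (auto simp: a_def b_def field_simps)
  have "2 / (1 - \<mu>) * ((1 - \<mu>) / (1 + \<mu>)) powr ((1 + \<mu>) / 2) = 1 / (a powr a * b powr b)"
  proof -
    have "b powr a = b / b powr b"
      unfolding \<open>a = 1 - b\<close> using ab by (simp add: powr_diff)
    then show ?thesis
      using ab(1,2,5,6) by (simp add: a_def[symmetric] powr_divide)
  qed
  also have "\<dots> = (x powr (2 * b) / a) powr a * (x powr (-2 * a) / b) powr b"
    using ab assms by (simp add: powr_divide powr_powr powr_add[symmetric] algebra_simps)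
  also have "\<dots> \<le> a * (x powr (2 * b) / a) + b * (x powr (-2 * a) / b)"
    using ab assms by (intro Youngs_inequality_0) auto
  also have "\<dots> = x powr (1 - \<mu>) + x powr (-1 - \<mu>)"
    using ab(1,2) by (simp add: ab(5,6)[symmetric])
  finally show ?thesis .
qed

definition phi_offset :: "nat \<Rightarrow> real \<Rightarrow> real" where
  "phi_offset n \<mu> = real n * \<mu> / (1 - \<mu>) * ((1 - \<mu>) / (1 + \<mu>)) powr ((1 + \<mu>) / 2)"

lemma phi_eq:
  "phi n \<mu> = pi / 2 * \<mu> + pi / 2 - arctan (cos (pi / 2 * \<mu>) / (sin (pi / 2 * \<mu>) + phi_offset n \<mu>))"
  by (simp add: phi_def phi_offset_def algebra_simps)

lemma phi_offset_nonneg: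
  assumes "0 < \<mu>" "\<mu> \<le> 1"
  shows "0 \<le> phi_offset n \<mu>"
  using assms by (simp add: phi_offset_def)

lemma phi_le_pi:
  assumes "0 < \<mu>" "\<mu> \<le> 1"
  shows "phi n \<mu> \<le> pi"
proof -
  have \<beta>: "0 < pi / 2 * \<mu>" "pi / 2 * \<mu> \<le> pi / 2"
    using assms by simp_all
  have "0 \<le> cos (pi / 2 * \<mu>)"
    by (rule cos_ge_zero) (use \<beta> pi_gt_zero in linarith)+
  moreover have "0 < sin (pi / 2 * \<mu>)"
    by (rule sin_gt_zero) (use \<beta> in linarith)+
  ultimately have "0 \<le> cos (pi / 2 * \<mu>) / (sin (pi / 2 * \<mu>) + phi_offset n \<mu>)"
    using phi_offset_nonneg[OF assms] by simp
  then have "0 \<le> arctan (cos (pi / 2 * \<mu>) / (sin (pi / 2 * \<mu>) + phi_offset n \<mu>))"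
    by simp
  then show ?thesis
    unfolding phi_eq using \<beta> by linarith
qed

lemma phi_offset_le:
  assumes \<mu>: "0 < \<mu>" "\<mu> \<le> 1" and A: "0 < A" and m: "real n \<le> m"
  shows "A powr \<mu> * phi_offset n \<mu> \<le> \<mu> * m * (A\<^sup>2 + 1) / (2 * A)"
proof (cases "\<mu> = 1")
  case True
  \<comment> \<open>here \<open>phi_offset n 1 = 0\<close>, because of division by zero\<close>
  then show ?thesis
    using A m by (simp add: phi_offset_def)
next
  case False
  then have "\<mu> < 1" using \<mu> by simp
  have "A powr \<mu> * phi_offset n \<mu>
      = n * \<mu> / 2 * A powr \<mu> * (2 / (1 - \<mu>) * ((1 - \<mu>) / (1 + \<mu>)) powr ((1 + \<mu>) / 2))"
    by (simp add: phi_offset_def field_simps)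
  also have "\<dots> \<le> n * \<mu> / 2 * A powr \<mu> * (A powr (1 - \<mu>) + A powr (-1 - \<mu>))"
    using powr_add_powr_ge[OF \<mu>(1) \<open>\<mu> < 1\<close> A] \<mu> by (intro mult_left_mono) auto
  also have "\<dots> = n * \<mu> * (A\<^sup>2 + 1) / (2 * A)"
    using A by (simp add: field_simps powr_add[symmetric] powr_minus powr_diff power2_eq_square)
  also have "\<dots> \<le> \<mu> * m * (A\<^sup>2 + 1) / (2 * A)"
    using \<mu> A m by (intro divide_right_mono mult_right_mono) (auto simp: mult.commute)
  finally show ?thesis .
qed

lemma phi_le_exit_angle:
  assumes \<mu>: "0 < \<mu>" "\<mu> \<le> 1" and A: "0 < A" and m: "real n \<le> m"
  shows "phi n \<mu> \<le> pi / 2 * \<mu> + pi / 2 - arctan (A powr \<mu> * cos (pi / 2 * \<mu>)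
    / (A powr \<mu> * sin (pi / 2 * \<mu>) + \<mu> * m * (A\<^sup>2 + 1) / (2 * A)))"
proof -
  define c s K where "c = cos (pi / 2 * \<mu>)" and "s = sin (pi / 2 * \<mu>)"
    and "K = \<mu> * m * (A\<^sup>2 + 1) / (2 * A)"
  have \<beta>: "0 < pi / 2 * \<mu>" "pi / 2 * \<mu> \<le> pi / 2"
    using \<mu> by simp_all
  have "0 \<le> c"
    unfolding c_def by (rule cos_ge_zero) (use \<beta> pi_gt_zero in linarith)+
  moreover have "0 < s"
    unfolding s_def by (rule sin_gt_zero) (use \<beta> in linarith)+
  moreover have "A powr \<mu> * phi_offset n \<mu> \<le> K"
    unfolding K_def using \<mu> A m by (rule phi_offset_le)
  moreover have "0 \<le> phi_offset n \<mu>" "0 \<le> K"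
    using phi_offset_nonneg[OF \<mu>] \<mu> A m by (auto simp: K_def)
  moreover have "0 < A powr \<mu> * s"
    using A \<open>0 < s\<close> by simp
  ultimately have "A powr \<mu> * c * (s + phi_offset n \<mu>) \<le> c * (A powr \<mu> * s + K)"
    "0 < s + phi_offset n \<mu>" "0 < A powr \<mu> * s + K"
    using mult_left_mono[of "A powr \<mu> * phi_offset n \<mu>" K c] by (auto simp: algebra_simps)
  then have "A powr \<mu> * c / (A powr \<mu> * s + K) \<le> c / (s + phi_offset n \<mu>)"
    by (simp add: field_simps)
  then show ?thesis
    unfolding phi_eq c_def [symmetric] s_def [symmetric] K_def [symmetric]
    using arctan_monotone' by (simp add: algebra_simps)
qed

lemma Arg_rcis_mult_add_ii:
  assumes b: "0 < b" "b \<le> pi / 2" and \<rho>: "0 < \<rho>" and K: "0 \<le> K"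
  shows "Arg (rcis \<rho> b * (rcis \<rho> b + \<i> * of_real K))
    = b + pi / 2 - arctan (\<rho> * cos b / (\<rho> * sin b + K))"
proof -
  define X Y where "X = \<rho> * cos b" and "Y = \<rho> * sin b + K"
  have "0 \<le> cos b" "0 < sin b"
    using b by (auto intro!: cos_ge_zero sin_gt_zero)
  then have "0 \<le> X" "0 < Y"
    using \<rho> K by (auto simp: X_def Y_def intro!: add_pos_nonneg)
  then have atn: "0 \<le> arctan (X / Y)" "arctan (X / Y) < pi / 2"
    using arctan_bounded[of "X / Y"] by (auto simp: zero_le_arctan_iff)
  have sum: "rcis \<rho> b + \<i> * of_real K = \<i> * Complex Y (- X)"
    by (simp add: complex_eq_iff X_def Y_def)
  have "Arg (Complex Y (- X)) = - arctan (X / Y)"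
    using \<open>0 < Y\<close> by (subst arg_conv_arctan) (auto simp: arctan_minus)
  then have arg_sum: "Arg (rcis \<rho> b + \<i> * of_real K) = pi / 2 - arctan (X / Y)"
    unfolding sum using \<open>0 < Y\<close> arctan_bounded[of "X / Y"]
    by (subst Arg_times) (auto simp: complex_eq_iff)
  have "rcis \<rho> b + \<i> * of_real K \<noteq> 0"
    unfolding sum using \<open>0 < Y\<close> by (simp add: complex_eq_iff)
  moreover have "Arg (rcis \<rho> b) = b"
    using b \<rho> by (intro Arg_unique') auto
  ultimately have "Arg (rcis \<rho> b * (rcis \<rho> b + \<i> * of_real K)) = b + (pi / 2 - arctan (X / Y))"
    using arg_sum atn b \<rho> by (subst Arg_times) (auto simp del: zero_le_arctan_iff)
  then show ?thesis
    by (simp add: X_def Y_def)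
qed

lemma abs_Arg_mult_add_ii:
  assumes w: "w \<noteq> 0" "\<bar>Arg w\<bar> = b" and b: "0 < b" "b \<le> pi / 2" and K: "0 \<le> K"
  shows "\<bar>Arg (w * (w + \<i> * of_real (sgn (Arg w) * K)))\<bar>
    = b + pi / 2 - arctan (norm w * cos b / (norm w * sin b + K))"
proof -
  define T where "T = rcis (norm w) b * (rcis (norm w) b + \<i> * of_real K)"
  have T: "Arg T = b + pi / 2 - arctan (norm w * cos b / (norm w * sin b + K))"
    unfolding T_def using w b K by (intro Arg_rcis_mult_add_ii) auto
  have "0 \<le> Arg T"
    using T b arctan_bounded[of "norm w * cos b / (norm w * sin b + K)"] by linarith
  have "w = rcis (norm w) (Arg w)"
    by (simp add: rcis_cmod_Arg)
  show ?thesis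
  proof (cases "0 < Arg w")
    case True
    with w have "w * (w + \<i> * of_real (sgn (Arg w) * K)) = T"
      by (subst (1 2) \<open>w = _\<close>) (simp add: T_def)
    then show ?thesis using T \<open>0 \<le> Arg T\<close> by simp
  next
    case False
    with w b have "Arg w = - b" by auto
    with w b have "w * (w + \<i> * of_real (sgn (Arg w) * K)) = cnj T"
      by (subst (1 2) \<open>w = _\<close>) (simp add: T_def rcis_def cis_cnj)
    then show ?thesis using T \<open>0 \<le> Arg T\<close> by (simp add: Arg_cnj)
  qed
qed

lemma exit_through_zero:
  fixes p P :: "complex \<Rightarrow> complex"
  assumes "0 < n"
    and holp: "p holomorphic_on ball 0 1" and holP: "P holomorphic_on ball 0 1"
    and fac: "\<forall>z\<in>ball 0 1. p z = 1 + z ^ n * P z"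
    and z0: "z0 \<in> ball 0 1" "0 < norm z0"
    and pos: "\<forall>z\<in>ball 0 (norm z0). 0 < Re (p z)" and zero: "p z0 = 0"
  shows "Arg ((p z0)\<^sup>2 + z0 * deriv p z0) = pi"
proof -
  have "ball 0 (norm z0) \<subseteq> ball 0 1"
    using z0 by auto
  then have "P holomorphic_on ball 0 (norm z0)" "\<forall>z\<in>ball 0 (norm z0). p z = 1 + z ^ n * P z"
    using holP fac by (auto intro: holomorphic_on_subset)
  moreover have "Re (p z0) = 0"
    using zero by simp
  ultimately obtain m where m: "real n \<le> m" "z0 * deriv p z0 = of_real m * ((p z0)\<^sup>2 - 1) / 2"
    using Jack_lemma_Re[OF open_ball \<open>ball 0 (norm z0) \<subseteq> ball 0 1\<close> z0(1) refl z0(2) holp _ _ pos]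
    by blast
  then have "(p z0)\<^sup>2 + z0 * deriv p z0 = of_real (- (m / 2))"
    using zero by simp
  moreover have "0 < m"
    using m(1) \<open>0 < n\<close> by linarith
  ultimately show ?thesis
    by (simp del: of_real_minus of_real_divide)
qed

lemma exit_through_edge:
  fixes p P :: "complex \<Rightarrow> complex"
  assumes \<mu>: "0 < \<mu>" "\<mu> \<le> 1"
    and holp: "p holomorphic_on ball 0 1" and holP: "P holomorphic_on ball 0 1"
    and fac: "\<forall>z\<in>ball 0 1. p z = 1 + z ^ n * P z"
    and z0: "z0 \<in> ball 0 1" "0 < norm z0"
    and inside: "p ` ball 0 (norm z0) \<subseteq> sector (pi / 2 * \<mu>)"
    and edge: "p z0 \<noteq> 0" "\<bar>Arg (p z0)\<bar> = pi / 2 * \<mu>"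
  shows "phi n \<mu> \<le> \<bar>Arg ((p z0)\<^sup>2 + z0 * deriv p z0)\<bar>"
proof -
  define A where "A = norm (p z0) powr (1 / \<mu>)"
  obtain m where m: "real n \<le> m"
    "z0 * deriv p z0 = \<i> * of_real (sgn (Arg (p z0)) * (\<mu> * m * (A\<^sup>2 + 1) / (2 * A))) * p z0"
    using Jack_lemma_root[OF \<mu> holp holP fac z0 inside edge] unfolding A_def by blast
  define K where "K = \<mu> * m * (A\<^sup>2 + 1) / (2 * A)"
  have "0 < A" "norm (p z0) = A powr \<mu>"
    using edge(1) \<mu>(1) by (simp_all add: A_def powr_powr)
  then have "0 \<le> K"
    using \<mu> m(1) by (simp add: K_def)
  have "(p z0)\<^sup>2 + z0 * deriv p z0 = p z0 * (p z0 + \<i> * of_real (sgn (Arg (p z0)) * K))"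
    unfolding m(2) K_def by (simp add: power2_eq_square algebra_simps)
  also have "\<bar>Arg \<dots>\<bar> = pi / 2 * \<mu> + pi / 2
      - arctan (norm (p z0) * cos (pi / 2 * \<mu>) / (norm (p z0) * sin (pi / 2 * \<mu>) + K))"
    by (rule abs_Arg_mult_add_ii) (use edge \<mu> \<open>0 \<le> K\<close> in auto)
  finally have "\<bar>Arg ((p z0)\<^sup>2 + z0 * deriv p z0)\<bar> = pi / 2 * \<mu> + pi / 2
      - arctan (norm (p z0) * cos (pi / 2 * \<mu>) / (norm (p z0) * sin (pi / 2 * \<mu>) + K))" .
  then show ?thesis
    using phi_le_exit_angle[OF \<mu> \<open>0 < A\<close> m(1)] \<open>norm (p z0) = A powr \<mu>\<close> by (simp add: K_def)
qed

lemma phi_le_abs_Arg_at_exit: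
  fixes p P :: "complex \<Rightarrow> complex"
  assumes "0 < n" and \<mu>: "0 < \<mu>" "\<mu> \<le> 1"
    and holp: "p holomorphic_on ball 0 1" and holP: "P holomorphic_on ball 0 1"
    and fac: "\<forall>z\<in>ball 0 1. p z = 1 + z ^ n * P z"
    and z0: "z0 \<in> ball 0 1" "0 < norm z0"
    and inside: "p ` ball 0 (norm z0) \<subseteq> sector (pi / 2 * \<mu>)"
    and exit: "p z0 \<in> closure (sector (pi / 2 * \<mu>))" "p z0 \<notin> sector (pi / 2 * \<mu>)"
  shows "phi n \<mu> \<le> \<bar>Arg ((p z0)\<^sup>2 + z0 * deriv p z0)\<bar>"
proof -
  have "pi / 2 * \<mu> \<le> pi / 2"
    using \<mu> by simp
  then consider "p z0 = 0" | "p z0 \<noteq> 0" "\<bar>Arg (p z0)\<bar> = pi / 2 * \<mu>"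
    using sector_boundary[OF _ exit] by blast
  then show ?thesis
  proof cases
    case 1
    have "\<forall>z\<in>ball 0 (norm z0). 0 < Re (p z)"
      using inside sector_subset_Re_pos[OF \<open>pi / 2 * \<mu> \<le> pi / 2\<close>] by blast
    then have "Arg ((p z0)\<^sup>2 + z0 * deriv p z0) = pi"
      using exit_through_zero[OF \<open>0 < n\<close> holp holP fac z0] 1 by blast
    then show ?thesis
      using phi_le_pi[OF \<mu>, of n] by simp
  next
    case 2
    then show ?thesis
      using exit_through_edge[OF \<mu> holp holP fac z0 inside] by blast
  qed
qed

theorem lemma3:
  fixes n :: nat and \<mu> :: real and p :: "complex \<Rightarrow> complex"
  assumes "0 < n" and "0 < \<mu>" and "\<mu> \<le> 1"
    and "p \<in> H1 n"
    and "\<forall>z\<in>ball 0 1. \<bar>Arg ((p z)\<^sup>2 + z * deriv p z)\<bar> < phi n \<mu>"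
  shows "\<forall>z\<in>ball 0 1. \<bar>Arg (p z)\<bar> < pi / 2 * \<mu>"
proof (rule ccontr)
  obtain P where holp: "p holomorphic_on ball 0 1" and holP: "P holomorphic_on ball 0 1"
    and fac: "\<forall>z\<in>ball 0 1. p z = 1 + z ^ n * P z"
    using H1_factor[OF assms(4,1)] .
  assume "\<not> ?thesis"
  then obtain z1 where z1: "z1 \<in> ball 0 1" "p z1 \<notin> sector (pi / 2 * \<mu>)"
    by (auto simp: sector_def)
  have "p 0 = 1"
    using fac assms(1) by simp
  then have "p 0 \<in> sector (pi / 2 * \<mu>)"
    using assms(2) by (simp add: sector_def)
  moreover have "open (sector (pi / 2 * \<mu>))"
    using assms(3) by (intro open_sector) simp
  ultimately obtain z0 where "z0 \<in> ball 0 1" "0 < norm z0"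
    "p ` ball 0 (norm z0) \<subseteq> sector (pi / 2 * \<mu>)"
    "p z0 \<in> closure (sector (pi / 2 * \<mu>))" "p z0 \<notin> sector (pi / 2 * \<mu>)"
    using first_exit_point[OF holomorphic_on_imp_continuous_on[OF holp] _ _ z1] by blast
  then have "phi n \<mu> \<le> \<bar>Arg ((p z0)\<^sup>2 + z0 * deriv p z0)\<bar>"
    using phi_le_abs_Arg_at_exit[OF assms(1-3) holp holP fac] by blast
  moreover have "\<bar>Arg ((p z0)\<^sup>2 + z0 * deriv p z0)\<bar> < phi n \<mu>"
    using assms(5) \<open>z0 \<in> ball 0 1\<close> by blast
  ultimately show False
    by simp
qed

end
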